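(* Let $\pi$ and $\mu$ be probability measures on $\mathbb{R}^d$ with $\mathrm{d}\pi(x)\propto\ell(x)\,\mathrm{d}\mu(x)$ for some integrable $\ell:\mathbb{R}^d\to\mathbb{R}_{\geq0}$, and let $\varphi_r:\mathbb{R}^d\to\mathbb{R}^r$ be any measurable feature map. For $\alpha\in(0,1]$ let $\ell_{\alpha,r}^{\mathrm{opt}}(\theta_r)=\mathbb{E}_{X\sim\mu}[\ell(X)^\alpha\mid\varphi_r(X)=\theta_r]^{1/\alpha}$ and $\mathrm{d}\pi_{\alpha,r}^{\mathrm{opt}}(x)\propto\ell_{\alpha,r}^{\mathrm{opt}}(\varphi_r(x))\,\mathrm{d}\mu(x)$. Then for any $0<\alpha\leq 1$, $$D_\alpha(\pi\,\|\,\pi_{\alpha,r}^{\mathrm{opt}})\leq D_\alpha(\pi\,\|\,\pi_{1,r}^{\mathrm{opt}})\leq\frac{1}{\alpha}D_\alpha(\pi\,\|\,\pi_{\alpha,r}^{\mathrm{opt}}).$$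
   Context: For $\alpha\in\mathbb{R}$, the Amari $\alpha$-divergence is $D_\alpha(\nu\|\mu)=\int\phi_\alpha\big(\frac{\mathrm{d}\nu}{\mathrm{d}\mu}\big)\mathrm{d}\mu$ with $\phi_\alpha(t)=\frac{t^\alpha-1}{\alpha(\alpha-1)}-\frac{t-1}{\alpha-1}$ for $\alpha\notin\{0,1\}$ and $\phi_1(t)=t\ln t-t+1$ (the KL divergence). Conditional expectations are taken with respect to the disintegration of $\mu$ given $\varphi_r(X)=\theta_r$. *)

theory Defs
  imports "HOL-Probability.Probability"
begin

text \<open>Amari alpha-divergence generator. The case a = 0 (not used) is set to its limit.\<close>
definition phi_alpha :: "real \<Rightarrow> real \<Rightarrow> real" where
  "phi_alpha a t =
     (if a = 1 then t * ln t - t + 1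
      else if a = 0 then t - 1 - ln t
      else (t powr a - 1) / (a * (a - 1)) - (t - 1) / (a - 1))"

text \<open>D_a(nu || mu) = integral of phi_a(d nu / d mu) d mu, as an extended nonnegative real
  (phi_a is nonnegative on [0,inf) for a > 0, so the value may be +infinity, e.g. KL).\<close>
definition alpha_div :: "real \<Rightarrow> 'a measure \<Rightarrow> 'a measure \<Rightarrow> ennreal" where
  "alpha_div a \<nu> \<mu> = (\<integral>\<^sup>+ x. ennreal (phi_alpha a (enn2real (RN_deriv \<mu> \<nu> x))) \<partial>\<mu>)"

text \<open>Optimal likelihood evaluated at the features: x \<mapsto> E[l(X)^a | phi(X)](x)^(1/a),
  the conditional expectation taken w.r.t. the sigma-algebra generated by the feature map.\<close>
definition l_opt :: "'a measure \<Rightarrow> ('a \<Rightarrow> 'b::topological_space) \<Rightarrow> ('a \<Rightarrow> real) \<Rightarrow> real \<Rightarrow> 'a \<Rightarrow> real" where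
  "l_opt \<mu> \<phi> l a x =
     (max 0 (real_cond_exp \<mu> (vimage_algebra (space \<mu>) \<phi> borel) (\<lambda>y. l y powr a) x)) powr (1 / a)"

definition pi_opt :: "'a measure \<Rightarrow> ('a \<Rightarrow> 'b::topological_space) \<Rightarrow> ('a \<Rightarrow> real) \<Rightarrow> real \<Rightarrow> 'a measure" where
  "pi_opt \<mu> \<phi> l a =
     density \<mu> (\<lambda>x. ennreal (l_opt \<mu> \<phi> l a x / (\<integral>y. l_opt \<mu> \<phi> l a y \<partial>\<mu>)))"

end

theory Submission
  imports Defs
begin

text \<open>
  For probability densities \<open>p, q\<close> and \<open>0 < \<alpha> < 1\<close> the divergence is
  \<open>(1 - A) / (\<alpha> (1 - \<alpha>))\<close> with the Hellinger affinity \<open>A = \<integral> p powr \<alpha> * q powr (1 - \<alpha>)\<close>,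
  so it suffices to compare affinities. Both approximating densities are functions of the
  feature, so inside the affinity \<open>l powr \<alpha>\<close> may be replaced by its conditional expectation
  \<open>L\<^sub>\<alpha> powr \<alpha>\<close>. With \<open>u = c L\<^sub>\<alpha>\<close> and \<open>v = c L\<^sub>1\<close> (so \<open>\<integral> v = 1\<close>) the two affinities become
  \<open>(\<integral> u) powr \<alpha>\<close> and \<open>\<integral> u powr \<alpha> * v powr (1 - \<alpha>)\<close>. Hoelder's inequality bounds the second
  by the first. Conditional Jensen gives \<open>u \<le> v\<close>, so the second is at least \<open>\<integral> u\<close>, and Young's
  inequality \<open>(\<integral> u) powr \<alpha> \<le> \<alpha> \<integral> u + 1 - \<alpha>\<close> turns this into the factor \<open>1 / \<alpha>\<close>.
\<close>

lemma Youngs_inequality_0_nonneg: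
  fixes x y t :: real
  assumes "0 \<le> x" "0 \<le> y" "0 < t" "t < 1"
  shows "x powr t * y powr (1 - t) \<le> t * x + (1 - t) * y"
  using Youngs_inequality_0[of t "1 - t" x y] assms by (cases "x = 0 \<or> y = 0") auto

lemma convex_on_powr_nonneg:
  fixes p :: real
  assumes "1 \<le> p"
  shows "convex_on {0..} (\<lambda>x. x powr p)"
proof (rule convex_on_linorderI)
  fix t x y :: real
  assume t: "0 < t" "t < 1" and xy: "x \<in> {0..}" "y \<in> {0..}" "x < y"
  show "((1 - t) *\<^sub>R x + t *\<^sub>R y) powr p \<le> (1 - t) * x powr p + t * y powr p"
  proof (cases "x = 0")
    case True
    have "t powr p \<le> t powr 1"
      using t assms by (intro powr_mono') auto
    then show ?thesis
      using True t xy by (simp add: powr_mult mult_right_mono)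
  next
    case False
    then show ?thesis
      using convex_onD[OF powr_convex[OF assms], of t x y] t xy by simp
  qed
qed simp

lemma convex_on_max_0_powr:
  fixes p :: real
  assumes "1 \<le> p"
  shows "convex_on UNIV (\<lambda>x. max 0 x powr p)"
proof (rule convex_onI)
  fix t x y :: real
  assume t: "0 < t" "t < 1"
  have "max 0 ((1 - t) *\<^sub>R x + t *\<^sub>R y) \<le> (1 - t) *\<^sub>R max 0 x + t *\<^sub>R max 0 y"
    using t by (auto intro: add_mono mult_left_mono)
  then have "max 0 ((1 - t) *\<^sub>R x + t *\<^sub>R y) powr p \<le> ((1 - t) *\<^sub>R max 0 x + t *\<^sub>R max 0 y) powr p"
    using assms by (intro powr_mono2) auto
  also have "\<dots> \<le> (1 - t) * max 0 x powr p + t * max 0 y powr p"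
    using convex_onD[OF convex_on_powr_nonneg[OF assms], of t "max 0 x" "max 0 y"] t by simp
  finally show "max 0 ((1 - t) *\<^sub>R x + t *\<^sub>R y) powr p \<le> (1 - t) * max 0 x powr p + t * max 0 y powr p" .
qed simp

lemma phi_alpha_eq:
  assumes "0 < a" "a < 1"
  shows "phi_alpha a t = (a * t + (1 - a) - t powr a) / (a * (1 - a))"
proof -
  have "(t - 1) / (a - 1) = a * (t - 1) / (a * (a - 1))"
    using assms by simp
  then have "phi_alpha a t = (t powr a - 1 - a * (t - 1)) / (a * (a - 1))"
    using assms by (simp add: phi_alpha_def diff_divide_distrib)
  also have "\<dots> = - (t powr a - 1 - a * (t - 1)) / - (a * (a - 1))"
    by (rule minus_divide_divide[symmetric])
  also have "\<dots> = (a * t + (1 - a) - t powr a) / (a * (1 - a))"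
    by (rule arg_cong2[where f = "(/)"]) (simp_all add: algebra_simps)
  finally show ?thesis .
qed

lemma borel_measurable_phi_alpha [measurable]: "phi_alpha a \<in> borel_measurable borel"
  unfolding phi_alpha_def by (cases "a = 1"; cases "a = 0") simp_all

lemma mult_phi_alpha_quotient_eq:
  fixes a p q :: real
  assumes "0 < a" "a < 1" "0 \<le> p" "0 \<le> q" "q = 0 \<longrightarrow> p = 0"
  shows "q * phi_alpha a (if q = 0 then 0 else p / q)
    = (a * p + (1 - a) * q - p powr a * q powr (1 - a)) / (a * (1 - a))"
proof (cases "q = 0")
  case False
  then have "q * (p / q) powr a = p powr a * q powr (1 - a)"
    using assms by (simp add: powr_divide powr_diff)
  then show ?thesis
    using False assms by (simp add: phi_alpha_eq field_simps)
qed (use assms in simp)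

lemma integrable_powr_mult_powr:
  fixes p q :: "'a \<Rightarrow> real"
  assumes "0 < a" "a < 1"
    and [measurable]: "p \<in> borel_measurable M" "q \<in> borel_measurable M"
    and "\<And>x. 0 \<le> p x" "\<And>x. 0 \<le> q x" "integrable M p" "integrable M q"
  shows "integrable M (\<lambda>x. p x powr a * q x powr (1 - a))"
proof (rule Bochner_Integration.integrable_bound)
  show "integrable M (\<lambda>x. a * p x + (1 - a) * q x)"
    using assms by auto
  show "AE x in M. norm (p x powr a * q x powr (1 - a)) \<le> norm (a * p x + (1 - a) * q x)"
    using Youngs_inequality_0_nonneg[of "p _" "q _" a] assms by auto
qed measurable

lemma Holder_inequality_powr:
  fixes p q :: "'a \<Rightarrow> real"
  assumes a: "0 < a" "a < 1"
    and [measurable]: "p \<in> borel_measurable M" "q \<in> borel_measurable M"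
    and nonneg: "\<And>x. 0 \<le> p x" "\<And>x. 0 \<le> q x" and int: "integrable M p" "integrable M q"
  shows "(\<integral>x. p x powr a * q x powr (1 - a) \<partial>M)
    \<le> (\<integral>x. p x \<partial>M) powr a * (\<integral>x. q x \<partial>M) powr (1 - a)"
proof -
  define P Q where "P = (\<integral>x. p x \<partial>M)" and "Q = (\<integral>x. q x \<partial>M)"
  have "0 \<le> P" "0 \<le> Q"
    unfolding P_def Q_def using nonneg by (simp_all add: integral_nonneg_AE)
  then consider "P = 0 \<or> Q = 0" | "0 < P" "0 < Q"
    by linarith
  then show ?thesis
  proof cases
    case 1
    then have "(AE x in M. p x = 0) \<or> (AE x in M. q x = 0)"
      unfolding P_def Q_def using int nonneg by (simp add: integral_nonneg_eq_0_iff_AE)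
    then have "AE x in M. p x powr a * q x powr (1 - a) = 0"
      by (auto elim: eventually_mono)
    then show ?thesis
      by (simp add: integral_eq_zero_AE)
  next
    case 2
    have "(\<integral>x. p x powr a * q x powr (1 - a) \<partial>M) / (P powr a * Q powr (1 - a))
        = (\<integral>x. (p x / P) powr a * (q x / Q) powr (1 - a) \<partial>M)"
      using 2 nonneg by (simp add: powr_divide)
    also have "\<dots> \<le> (\<integral>x. a * (p x / P) + (1 - a) * (q x / Q) \<partial>M)"
      using 2 a nonneg int
      by (intro integral_mono integrable_powr_mult_powr Youngs_inequality_0_nonneg) auto
    also have "\<dots> = 1"
      using 2 int unfolding P_def Q_def by simp
    finally show ?thesis
      using 2 unfolding P_def Q_def by (simp add: pos_divide_le_eq)
  qed
qed

lemma alpha_div_density_density: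
  fixes p q :: "'a \<Rightarrow> real"
  assumes [measurable]: "p \<in> borel_measurable M" "q \<in> borel_measurable M"
    and nonneg: "\<And>x. 0 \<le> p x" "\<And>x. 0 \<le> q x" and "integrable M p"
    and abs_cont: "AE x in M. q x = 0 \<longrightarrow> p x = 0"
  shows "alpha_div a (density M p) (density M q)
    = (\<integral>\<^sup>+x. ennreal (q x) * ennreal (phi_alpha a (if q x = 0 then 0 else p x / q x)) \<partial>M)"
proof -
  define h where "h x = (if q x = 0 then 0 else p x / q x)" for x
  have [measurable]: "h \<in> borel_measurable M"
    unfolding h_def by measurable
  have "density M (\<lambda>x. ennreal (q x) * ennreal (h x)) = density M p"
    using abs_cont
    by (intro density_cong) (auto simp: h_def nonneg elim!: eventually_mono simp flip: ennreal_mult')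
  then have density_h: "density (density M q) h = density M p"
    by (simp add: density_density_eq)
  have "emeasure (density M p) (space M) \<noteq> \<infinity>"
    using \<open>integrable M p\<close> nonneg by (simp add: emeasure_density nn_integral_eq_integral)
  then have "sigma_finite_measure (density M p)"
    by (intro finite_measure.sigma_finite_measure finite_measureI) simp
  then have "AE x in density M q. h x = RN_deriv (density M q) (density M p) x"
    using density_h by (intro RN_deriv_unique_sigma_finite) simp_all
  moreover have "0 \<le> h x" for x
    unfolding h_def using nonneg by simp
  ultimately have "AE x in density M q. enn2real (RN_deriv (density M q) (density M p) x) = h x"
    by (elim eventually_mono) (metis enn2real_ennreal)
  then have "alpha_div a (density M p) (density M q)
      = (\<integral>\<^sup>+x. ennreal (phi_alpha a (h x)) \<partial>density M q)"
    unfolding alpha_div_def by (intro nn_integral_cong_AE) (auto elim: eventually_mono)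
  also have "\<dots> = (\<integral>\<^sup>+x. ennreal (q x) * ennreal (phi_alpha a (h x)) \<partial>M)"
    by (simp add: nn_integral_density)
  finally show ?thesis
    unfolding h_def .
qed

lemma alpha_div_density_eq:
  fixes p q :: "'a \<Rightarrow> real"
  assumes a: "0 < a" "a < 1"
    and [measurable]: "p \<in> borel_measurable M" "q \<in> borel_measurable M"
    and nonneg: "\<And>x. 0 \<le> p x" "\<And>x. 0 \<le> q x" and int: "integrable M p" "integrable M q"
    and prob: "(\<integral>x. p x \<partial>M) = 1" "(\<integral>x. q x \<partial>M) = 1"
    and abs_cont: "AE x in M. q x = 0 \<longrightarrow> p x = 0"
  shows "alpha_div a (density M p) (density M q)
    = ennreal ((1 - (\<integral>x. p x powr a * q x powr (1 - a) \<partial>M)) / (a * (1 - a)))"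
proof -
  define G where "G x = p x powr a * q x powr (1 - a)" for x
  define f where "f x = (a * p x + (1 - a) * q x - G x) / (a * (1 - a))" for x
  have int_G: "integrable M G"
    unfolding G_def using assms by (intro integrable_powr_mult_powr) auto
  have "alpha_div a (density M p) (density M q) = (\<integral>\<^sup>+x. ennreal (f x) \<partial>M)"
    unfolding alpha_div_density_density[OF assms(3-7) abs_cont]
    using abs_cont
    by (intro nn_integral_cong_AE, elim eventually_mono)
       (simp only: f_def G_def ennreal_mult'[OF nonneg(2), symmetric]
          mult_phi_alpha_quotient_eq[OF a nonneg(1,2)])
  also have "\<dots> = ennreal (\<integral>x. f x \<partial>M)"
  proof (rule nn_integral_eq_integral)
    show "integrable M f"
      unfolding f_def using int int_G by auto
    show "AE x in M. 0 \<le> f x"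
      using Youngs_inequality_0_nonneg[of "p _" "q _" a] a nonneg by (auto simp: f_def G_def)
  qed
  also have "(\<integral>x. f x \<partial>M) = (1 - (\<integral>x. G x \<partial>M)) / (a * (1 - a))"
    unfolding f_def using int int_G prob by simp
  finally show ?thesis
    unfolding G_def .
qed

lemma divergence_bounds_of_affinity_bounds:
  fixes \<alpha> s J :: real
  assumes \<alpha>: "0 < \<alpha>" "\<alpha> < 1" and "0 \<le> s" "s \<le> J" "J \<le> s powr \<alpha>"
  shows "ennreal ((1 - s powr \<alpha>) / (\<alpha> * (1 - \<alpha>))) \<le> ennreal ((1 - J) / (\<alpha> * (1 - \<alpha>)))"
    and "ennreal ((1 - J) / (\<alpha> * (1 - \<alpha>)))
      \<le> ennreal (1 / \<alpha>) * ennreal ((1 - s powr \<alpha>) / (\<alpha> * (1 - \<alpha>)))"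
proof -
  show "ennreal ((1 - s powr \<alpha>) / (\<alpha> * (1 - \<alpha>))) \<le> ennreal ((1 - J) / (\<alpha> * (1 - \<alpha>)))"
    using assms by (intro ennreal_leI divide_right_mono) auto
  have "s powr \<alpha> \<le> \<alpha> * s + (1 - \<alpha>)"
    using Youngs_inequality_0_nonneg[of s 1 \<alpha>] assms by simp
  moreover have "\<alpha> * (1 - J) \<le> \<alpha> * (1 - s)"
    using assms by (intro mult_left_mono) auto
  ultimately have "\<alpha> * (1 - J) \<le> 1 - s powr \<alpha>"
    by (simp add: algebra_simps)
  then have "\<alpha> * (1 - J) / (\<alpha> * (\<alpha> * (1 - \<alpha>))) \<le> (1 - s powr \<alpha>) / (\<alpha> * (\<alpha> * (1 - \<alpha>)))"
    using \<alpha> by (intro divide_right_mono) auto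
  then have "(1 - J) / (\<alpha> * (1 - \<alpha>)) \<le> 1 / \<alpha> * ((1 - s powr \<alpha>) / (\<alpha> * (1 - \<alpha>)))"
    using \<alpha> by simp
  then show "ennreal ((1 - J) / (\<alpha> * (1 - \<alpha>)))
      \<le> ennreal (1 / \<alpha>) * ennreal ((1 - s powr \<alpha>) / (\<alpha> * (1 - \<alpha>)))"
    using \<alpha> by (simp add: ennreal_leI flip: ennreal_mult')
qed

lemma prob_space_density_imp_integral_eq_1:
  fixes f :: "'a \<Rightarrow> real"
  assumes "prob_space (density M f)" "integrable M f" "\<And>x. 0 \<le> f x"
  shows "(\<integral>x. f x \<partial>M) = 1"
proof -
  have "ennreal (\<integral>x. f x \<partial>M) = emeasure (density M f) (space M)"
    using assms by (simp add: emeasure_density nn_integral_eq_integral)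
  also have "\<dots> = 1"
    using prob_space.emeasure_space_1[OF assms(1)] by simp
  finally show ?thesis
    using assms by (simp add: integral_nonneg_AE)
qed

context sigma_finite_subalgebra
begin

lemma real_cond_exp_intg_max_0:
  assumes [measurable]: "f \<in> borel_measurable M" and "\<And>x. 0 \<le> f x"
    and [measurable]: "w \<in> borel_measurable F" and int: "integrable M (\<lambda>x. w x * f x)"
  shows "integrable M (\<lambda>x. w x * max 0 (real_cond_exp M F f x))"
    and "(\<integral>x. w x * max 0 (real_cond_exp M F f x) \<partial>M) = (\<integral>x. w x * f x \<partial>M)"
proof -
  have [measurable]: "w \<in> borel_measurable M"
    by (rule measurable_from_subalg[OF subalg]) measurable
  have "AE x in M. 0 \<le> real_cond_exp M F f x"
    using assms by (intro real_cond_exp_pos) auto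
  then have ae: "AE x in M. w x * max 0 (real_cond_exp M F f x) = w x * real_cond_exp M F f x"
    by eventually_elim simp
  show "integrable M (\<lambda>x. w x * max 0 (real_cond_exp M F f x))"
    using integrable_cong_AE[OF _ _ ae] real_cond_exp_intg(1)[OF int] by simp
  show "(\<integral>x. w x * max 0 (real_cond_exp M F f x) \<partial>M) = (\<integral>x. w x * f x \<partial>M)"
    using integral_cong_AE[OF _ _ ae] real_cond_exp_intg(2)[OF int] by simp
qed

lemma real_cond_exp_powr_root_le:
  assumes [measurable]: "f \<in> borel_measurable M" and nonneg: "\<And>x. 0 \<le> f x"
    and a: "0 < a" "a \<le> 1" and "integrable M f" "integrable M (\<lambda>x. f x powr a)"
  shows "AE x in M. max 0 (real_cond_exp M F (\<lambda>y. f y powr a) x) powr (1 / a)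
    \<le> max 0 (real_cond_exp M F f x)"
proof -
  define q where "q t = max 0 t powr (1 / a)" for t :: real
  have f_eq: "(\<lambda>y. q (f y powr a)) = f"
    using a nonneg by (simp add: q_def powr_powr)
  have "convex_on UNIV q"
    unfolding q_def using a by (intro convex_on_max_0_powr) simp
  moreover have "q \<in> borel_measurable borel"
    unfolding q_def by measurable
  ultimately have "AE x in M. q (real_cond_exp M F (\<lambda>y. f y powr a) x)
      \<le> real_cond_exp M F (\<lambda>y. q (f y powr a)) x"
    using assms by (intro real_cond_exp_jensens_inequality(2)[where I = UNIV]) (simp_all add: f_eq)
  then show ?thesis
    unfolding f_eq by eventually_elim (auto simp: q_def)
qed

lemma AE_real_cond_exp_eq_0_imp:
  assumes [measurable]: "f \<in> borel_measurable M" and int: "integrable M f"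
    and nonneg: "\<And>x. 0 \<le> f x"
  shows "AE x in M. max 0 (real_cond_exp M F f x) = 0 \<longrightarrow> f x = 0"
proof -
  define S where "S = {x \<in> space M. max 0 (real_cond_exp M F f x) = 0}"
  have "{x \<in> space F. max 0 (real_cond_exp M F f x) = 0} \<in> sets F"
    by measurable
  moreover have "space F = space M"
    using subalg by (simp add: subalgebra_def)
  ultimately have "S \<in> sets F"
    unfolding S_def by simp
  then have [measurable]: "indicator S \<in> borel_measurable F" and "S \<in> sets M"
    using subalg by (auto simp: subalgebra_def)
  then have int_S: "integrable M (\<lambda>x. indicator S x * f x)"
    using integrable_mult_indicator[OF _ int] by simp
  have "(\<integral>x. indicator S x * f x \<partial>M) = (\<integral>x. indicator S x * max 0 (real_cond_exp M F f x) \<partial>M)"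
    using real_cond_exp_intg_max_0(2)[OF _ nonneg _ int_S] by simp
  also have "\<dots> = 0"
    by (intro integral_eq_zero_AE AE_I2) (simp add: S_def indicator_def)
  finally have "AE x in M. indicator S x * f x = 0"
    using int_S nonneg by (simp add: integral_nonneg_eq_0_iff_AE)
  then show ?thesis
    by (auto simp: S_def indicator_def elim!: eventually_mono)
qed

end

locale feature_likelihood = prob_space \<mu> for \<mu> :: "'a measure" +
  fixes \<phi> :: "'a \<Rightarrow> 'b::topological_space" and l :: "'a \<Rightarrow> real" and c :: real
  assumes measurable_feature: "\<phi> \<in> \<mu> \<rightarrow>\<^sub>M borel"
    and l_measurable [measurable]: "l \<in> borel_measurable \<mu>"
    and integrable_l: "integrable \<mu> l"
    and l_nonneg: "\<And>x. 0 \<le> l x"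
    and normalising: "c * (\<integral>x. l x \<partial>\<mu>) = 1"
begin

abbreviation "\<F> \<equiv> vimage_algebra (space \<mu>) \<phi> borel"

lemma subalgebra_feature: "subalgebra \<mu> \<F>"
  unfolding subalgebra_def using sets_image_in_sets[OF refl measurable_feature] by simp

sublocale finite_measure_subalgebra \<mu> \<F>
  by unfold_locales (rule subalgebra_feature)

lemma
  shows c_pos: "0 < c" and integral_l_pos: "0 < (\<integral>x. l x \<partial>\<mu>)"
proof -
  have "0 \<le> (\<integral>x. l x \<partial>\<mu>)"
    by (simp add: integral_nonneg_AE l_nonneg)
  then show "0 < c" "0 < (\<integral>x. l x \<partial>\<mu>)"
    using normalising zero_less_mult_iff[of c "\<integral>x. l x \<partial>\<mu>"] by auto
qed

lemma l_opt_measurable_feature [measurable]: "l_opt \<mu> \<phi> l a \<in> borel_measurable \<F>"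
  unfolding l_opt_def by measurable

lemma l_opt_measurable [measurable]: "l_opt \<mu> \<phi> l a \<in> borel_measurable \<mu>"
  by (rule measurable_from_subalg[OF subalg]) measurable

lemma l_opt_nonneg: "0 \<le> l_opt \<mu> \<phi> l a x"
  by (simp add: l_opt_def)

lemma integrable_l_powr:
  assumes "0 < a" "a \<le> 1"
  shows "integrable \<mu> (\<lambda>x. l x powr a)"
proof (rule Bochner_Integration.integrable_bound)
  show "integrable \<mu> (\<lambda>x. 1 + l x)"
    using integrable_l by simp
  have "l x powr a \<le> 1 + l x" for x
  proof (cases "l x \<le> 1")
    case True
    then show ?thesis
      using assms l_nonneg[of x] powr_le1[of a "l x"] by simp
  next
    case False
    then show ?thesis
      using assms powr_mono[of a 1 "l x"] by simp
  qed
  then show "AE x in \<mu>. norm (l x powr a) \<le> norm (1 + l x)"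
    using l_nonneg by (simp add: abs_of_nonneg add_nonneg_nonneg)
qed measurable

lemma l_opt_powr:
  "0 < a \<Longrightarrow> l_opt \<mu> \<phi> l a x powr a = max 0 (real_cond_exp \<mu> \<F> (\<lambda>y. l y powr a) x)"
  by (simp add: l_opt_def powr_powr)

lemma l_opt_one: "l_opt \<mu> \<phi> l 1 x = max 0 (real_cond_exp \<mu> \<F> l x)"
  by (simp add: l_opt_def l_nonneg abs_of_nonneg)

lemma integral_mult_l_opt_powr:
  assumes "0 < a" "a \<le> 1" "w \<in> borel_measurable \<F>" "integrable \<mu> (\<lambda>x. w x * l x powr a)"
  shows "(\<integral>x. w x * l_opt \<mu> \<phi> l a x powr a \<partial>\<mu>) = (\<integral>x. w x * l x powr a \<partial>\<mu>)"
  using real_cond_exp_intg_max_0(2)[of "\<lambda>x. l x powr a" w] assms by (simp add: l_opt_powr)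

lemma
  shows integrable_l_opt_one: "integrable \<mu> (l_opt \<mu> \<phi> l 1)"
    and integral_l_opt_one: "(\<integral>x. l_opt \<mu> \<phi> l 1 x \<partial>\<mu>) = (\<integral>x. l x \<partial>\<mu>)"
  using real_cond_exp_intg_max_0[of l "\<lambda>_. 1"] integrable_l l_nonneg by (simp_all add: l_opt_one[abs_def])

lemma l_opt_le_l_opt_one:
  assumes "0 < a" "a \<le> 1"
  shows "AE x in \<mu>. l_opt \<mu> \<phi> l a x \<le> l_opt \<mu> \<phi> l 1 x"
proof -
  have "AE x in \<mu>. l_opt \<mu> \<phi> l a x \<le> max 0 (real_cond_exp \<mu> \<F> l x)"
    using real_cond_exp_powr_root_le[OF l_measurable l_nonneg assms integrable_l integrable_l_powr[OF assms]]
    by (simp add: l_opt_def)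
  then show ?thesis
    by (simp add: l_opt_one)
qed

lemma integrable_l_opt:
  assumes "0 < a" "a \<le> 1"
  shows "integrable \<mu> (l_opt \<mu> \<phi> l a)"
  by (rule Bochner_Integration.integrable_bound[OF integrable_l_opt_one])
    (use l_opt_le_l_opt_one[OF assms] in \<open>auto simp: l_opt_nonneg elim!: eventually_mono\<close>)

lemma AE_l_opt_eq_0_imp:
  assumes "0 < a" "a \<le> 1"
  shows "AE x in \<mu>. l_opt \<mu> \<phi> l a x = 0 \<longrightarrow> l x = 0"
  using AE_real_cond_exp_eq_0_imp[of "\<lambda>x. l x powr a"] integrable_l_powr[OF assms] assms
  by (auto simp: l_opt_def elim!: eventually_mono)

lemma integral_l_opt_pos:
  assumes "0 < a" "a \<le> 1"
  shows "0 < (\<integral>x. l_opt \<mu> \<phi> l a x \<partial>\<mu>)"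
proof (rule ccontr)
  assume "\<not> 0 < (\<integral>x. l_opt \<mu> \<phi> l a x \<partial>\<mu>)"
  moreover have "0 \<le> (\<integral>x. l_opt \<mu> \<phi> l a x \<partial>\<mu>)"
    by (simp add: integral_nonneg_AE l_opt_nonneg)
  ultimately have "(\<integral>x. l_opt \<mu> \<phi> l a x \<partial>\<mu>) = 0"
    by simp
  then have "AE x in \<mu>. l_opt \<mu> \<phi> l a x = 0"
    by (simp add: integral_nonneg_eq_0_iff_AE[OF integrable_l_opt[OF assms]] l_opt_nonneg)
  then have "AE x in \<mu>. l x = 0"
    using AE_l_opt_eq_0_imp[OF assms] by eventually_elim simp
  then show False
    using integral_l_pos by (simp add: integral_eq_zero_AE)
qed

lemma integral_affinity_l_opt_eq:
  assumes \<alpha>: "0 < \<alpha>" "\<alpha> < 1"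
    and [measurable]: "g \<in> borel_measurable \<F>" and "\<And>x. 0 \<le> g x" "integrable \<mu> g"
  shows "(\<integral>x. (c * l x) powr \<alpha> * g x powr (1 - \<alpha>) \<partial>\<mu>)
    = (\<integral>x. (c * l_opt \<mu> \<phi> l \<alpha> x) powr \<alpha> * g x powr (1 - \<alpha>) \<partial>\<mu>)"
proof -
  have [measurable]: "g \<in> borel_measurable \<mu>"
    by (rule measurable_from_subalg[OF subalg]) measurable
  define w where "w x = c powr \<alpha> * g x powr (1 - \<alpha>)" for x
  have [measurable]: "w \<in> borel_measurable \<F>"
    unfolding w_def by measurable
  have split_l: "(c * l x) powr \<alpha> * g x powr (1 - \<alpha>) = w x * l x powr \<alpha>" for x
    unfolding w_def powr_mult by (simp add: mult_ac)
  have "integrable \<mu> (\<lambda>x. (c * l x) powr \<alpha> * g x powr (1 - \<alpha>))"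
    using assms c_pos l_nonneg integrable_l by (intro integrable_powr_mult_powr) auto
  then have "integrable \<mu> (\<lambda>x. w x * l x powr \<alpha>)"
    unfolding split_l .
  then have "(\<integral>x. (c * l x) powr \<alpha> * g x powr (1 - \<alpha>) \<partial>\<mu>)
      = (\<integral>x. w x * l_opt \<mu> \<phi> l \<alpha> x powr \<alpha> \<partial>\<mu>)"
    unfolding split_l using \<alpha> by (intro integral_mult_l_opt_powr[symmetric]) auto
  also have "\<dots> = (\<integral>x. (c * l_opt \<mu> \<phi> l \<alpha> x) powr \<alpha> * g x powr (1 - \<alpha>) \<partial>\<mu>)"
    unfolding w_def powr_mult by (simp add: mult_ac)
  finally show ?thesis .
qed

lemma alpha_div_pi_opt_eq:
  assumes \<alpha>: "0 < \<alpha>" "\<alpha> < 1" and a: "0 < a" "a \<le> 1"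
  defines "Z \<equiv> \<integral>x. l_opt \<mu> \<phi> l a x \<partial>\<mu>"
  shows "alpha_div \<alpha> (density \<mu> (\<lambda>x. ennreal (c * l x))) (pi_opt \<mu> \<phi> l a)
    = ennreal ((1 - (\<integral>x. (c * l_opt \<mu> \<phi> l \<alpha> x) powr \<alpha> * (l_opt \<mu> \<phi> l a x / Z) powr (1 - \<alpha>) \<partial>\<mu>))
        / (\<alpha> * (1 - \<alpha>)))"
proof -
  have "0 < Z"
    unfolding Z_def using a by (rule integral_l_opt_pos)
  have nonneg: "0 \<le> c * l x" "0 \<le> l_opt \<mu> \<phi> l a x / Z" for x
    using c_pos l_nonneg[of x] l_opt_nonneg[of a x] \<open>0 < Z\<close> by simp_all
  have affinity_eq:
    "(\<integral>x. (c * l_opt \<mu> \<phi> l \<alpha> x) powr \<alpha> * (l_opt \<mu> \<phi> l a x / Z) powr (1 - \<alpha>) \<partial>\<mu>)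
      = (\<integral>x. (c * l x) powr \<alpha> * (l_opt \<mu> \<phi> l a x / Z) powr (1 - \<alpha>) \<partial>\<mu>)"
    using nonneg integrable_l_opt[OF a] by (intro integral_affinity_l_opt_eq[OF \<alpha>, symmetric]) auto
  have "alpha_div \<alpha> (density \<mu> (\<lambda>x. ennreal (c * l x))) (pi_opt \<mu> \<phi> l a)
      = ennreal ((1 - (\<integral>x. (c * l x) powr \<alpha> * (l_opt \<mu> \<phi> l a x / Z) powr (1 - \<alpha>) \<partial>\<mu>))
        / (\<alpha> * (1 - \<alpha>)))"
    unfolding pi_opt_def Z_def[symmetric]
  proof (rule alpha_div_density_eq[OF \<alpha> _ _ nonneg])
    show "integrable \<mu> (\<lambda>x. c * l x)" "integrable \<mu> (\<lambda>x. l_opt \<mu> \<phi> l a x / Z)"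
      using integrable_l integrable_l_opt[OF a] by simp_all
    show "(\<integral>x. c * l x \<partial>\<mu>) = 1" "(\<integral>x. l_opt \<mu> \<phi> l a x / Z \<partial>\<mu>) = 1"
      using normalising \<open>0 < Z\<close> unfolding Z_def by simp_all
    show "AE x in \<mu>. l_opt \<mu> \<phi> l a x / Z = 0 \<longrightarrow> c * l x = 0"
      using AE_l_opt_eq_0_imp[OF a] \<open>0 < Z\<close> by (auto elim!: eventually_mono)
  qed measurable
  then show ?thesis
    unfolding affinity_eq .
qed

lemma alpha_div_pi_opt_alpha:
  assumes "0 < \<alpha>" "\<alpha> < 1"
  shows "alpha_div \<alpha> (density \<mu> (\<lambda>x. ennreal (c * l x))) (pi_opt \<mu> \<phi> l \<alpha>)
    = ennreal ((1 - (c * (\<integral>x. l_opt \<mu> \<phi> l \<alpha> x \<partial>\<mu>)) powr \<alpha>) / (\<alpha> * (1 - \<alpha>)))"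
proof -
  define Z where "Z = (\<integral>x. l_opt \<mu> \<phi> l \<alpha> x \<partial>\<mu>)"
  have "0 < Z"
    unfolding Z_def using assms by (intro integral_l_opt_pos) auto
  have "(c * l_opt \<mu> \<phi> l \<alpha> x) powr \<alpha> * (l_opt \<mu> \<phi> l \<alpha> x / Z) powr (1 - \<alpha>)
      = c powr \<alpha> / Z powr (1 - \<alpha>) * l_opt \<mu> \<phi> l \<alpha> x" for x
  proof -
    have "l_opt \<mu> \<phi> l \<alpha> x powr \<alpha> * l_opt \<mu> \<phi> l \<alpha> x powr (1 - \<alpha>) = l_opt \<mu> \<phi> l \<alpha> x"
      using l_opt_nonneg by (simp add: powr_add[symmetric])
    then show ?thesis
      unfolding powr_mult powr_divide
      by (simp add: field_simps)
  qed
  then have "(\<integral>x. (c * l_opt \<mu> \<phi> l \<alpha> x) powr \<alpha> * (l_opt \<mu> \<phi> l \<alpha> x / Z) powr (1 - \<alpha>) \<partial>\<mu>)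
      = c powr \<alpha> / Z powr (1 - \<alpha>) * Z"
    unfolding Z_def by simp
  also have "\<dots> = (c * Z) powr \<alpha>"
    using powr_diff[of Z 1 "1 - \<alpha>"] \<open>0 < Z\<close> by (simp add: powr_mult)
  finally show ?thesis
    using alpha_div_pi_opt_eq[of \<alpha> \<alpha>] assms unfolding Z_def by simp
qed

lemma alpha_div_pi_opt_one:
  assumes "0 < \<alpha>" "\<alpha> < 1"
  shows "alpha_div \<alpha> (density \<mu> (\<lambda>x. ennreal (c * l x))) (pi_opt \<mu> \<phi> l 1)
    = ennreal ((1 - (\<integral>x. (c * l_opt \<mu> \<phi> l \<alpha> x) powr \<alpha> * (c * l_opt \<mu> \<phi> l 1 x) powr (1 - \<alpha>) \<partial>\<mu>))
        / (\<alpha> * (1 - \<alpha>)))"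
proof -
  have "(\<integral>y. l_opt \<mu> \<phi> l 1 y \<partial>\<mu>) = 1 / c"
    using normalising c_pos by (simp add: integral_l_opt_one eq_divide_eq mult.commute)
  then have "l_opt \<mu> \<phi> l 1 x / (\<integral>y. l_opt \<mu> \<phi> l 1 y \<partial>\<mu>) = c * l_opt \<mu> \<phi> l 1 x" for x
    by simp
  then show ?thesis
    using alpha_div_pi_opt_eq[of \<alpha> 1] assms by simp
qed

lemma hellinger_affinity_bounds:
  assumes \<alpha>: "0 < \<alpha>" "\<alpha> < 1"
  shows "c * (\<integral>x. l_opt \<mu> \<phi> l \<alpha> x \<partial>\<mu>)
      \<le> (\<integral>x. (c * l_opt \<mu> \<phi> l \<alpha> x) powr \<alpha> * (c * l_opt \<mu> \<phi> l 1 x) powr (1 - \<alpha>) \<partial>\<mu>)"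
    and "(\<integral>x. (c * l_opt \<mu> \<phi> l \<alpha> x) powr \<alpha> * (c * l_opt \<mu> \<phi> l 1 x) powr (1 - \<alpha>) \<partial>\<mu>)
      \<le> (c * (\<integral>x. l_opt \<mu> \<phi> l \<alpha> x \<partial>\<mu>)) powr \<alpha>"
proof -
  define u v where "u x = c * l_opt \<mu> \<phi> l \<alpha> x" and "v x = c * l_opt \<mu> \<phi> l 1 x" for x
  have [measurable]: "u \<in> borel_measurable \<mu>" "v \<in> borel_measurable \<mu>"
    unfolding u_def v_def by measurable
  have nonneg: "0 \<le> u x" "0 \<le> v x" for x
    unfolding u_def v_def using c_pos l_opt_nonneg by simp_all
  have int: "integrable \<mu> u" "integrable \<mu> v"
    unfolding u_def v_def using \<alpha> integrable_l_opt integrable_l_opt_one by simp_all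
  have int_uv: "integrable \<mu> (\<lambda>x. u x powr \<alpha> * v x powr (1 - \<alpha>))"
    using \<alpha> nonneg int by (intro integrable_powr_mult_powr) auto
  have "AE x in \<mu>. u x \<le> v x"
    using l_opt_le_l_opt_one[of \<alpha>] \<alpha> c_pos unfolding u_def v_def by (auto elim!: eventually_mono)
  then have "AE x in \<mu>. u x \<le> u x powr \<alpha> * v x powr (1 - \<alpha>)"
  proof eventually_elim
    case (elim x)
    have "u x = u x powr \<alpha> * u x powr (1 - \<alpha>)"
      using nonneg by (simp add: powr_add[symmetric])
    also have "\<dots> \<le> u x powr \<alpha> * v x powr (1 - \<alpha>)"
      using elim nonneg \<alpha> by (intro mult_left_mono powr_mono2) auto
    finally show ?case .
  qed
  then have "(\<integral>x. u x \<partial>\<mu>) \<le> (\<integral>x. u x powr \<alpha> * v x powr (1 - \<alpha>) \<partial>\<mu>)"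
    using int int_uv by (intro integral_mono_AE) auto
  then show "c * (\<integral>x. l_opt \<mu> \<phi> l \<alpha> x \<partial>\<mu>)
      \<le> (\<integral>x. (c * l_opt \<mu> \<phi> l \<alpha> x) powr \<alpha> * (c * l_opt \<mu> \<phi> l 1 x) powr (1 - \<alpha>) \<partial>\<mu>)"
    unfolding u_def v_def by simp
  have "(\<integral>x. v x \<partial>\<mu>) = 1"
    unfolding v_def using normalising by (simp add: integral_l_opt_one)
  then show "(\<integral>x. (c * l_opt \<mu> \<phi> l \<alpha> x) powr \<alpha> * (c * l_opt \<mu> \<phi> l 1 x) powr (1 - \<alpha>) \<partial>\<mu>)
      \<le> (c * (\<integral>x. l_opt \<mu> \<phi> l \<alpha> x \<partial>\<mu>)) powr \<alpha>"
    using Holder_inequality_powr[OF \<alpha> _ _ nonneg int] unfolding u_def v_def by simp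
qed

end

theorem proposition2p2:
  fixes \<mu> \<pi> :: "(real ^ 'd) measure"
    and l :: "real ^ 'd \<Rightarrow> real"
    and \<phi> :: "real ^ 'd \<Rightarrow> real ^ 'r"
    and \<alpha> :: real
  assumes "prob_space \<mu>" and "sets \<mu> = sets borel"
    and "prob_space \<pi>"
    and "l \<in> borel_measurable borel" and "integrable \<mu> l" and "\<And>x. l x \<ge> 0"
    and "\<exists>c>0. \<pi> = density \<mu> (\<lambda>x. ennreal (c * l x))"
    and "\<phi> \<in> borel_measurable borel"
    and "0 < \<alpha>" and "\<alpha> \<le> 1"
  shows "alpha_div \<alpha> \<pi> (pi_opt \<mu> \<phi> l \<alpha>) \<le> alpha_div \<alpha> \<pi> (pi_opt \<mu> \<phi> l 1)
       \<and> alpha_div \<alpha> \<pi> (pi_opt \<mu> \<phi> l 1) \<le> ennreal (1 / \<alpha>) * alpha_div \<alpha> \<pi> (pi_opt \<mu> \<phi> l \<alpha>)"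
proof (cases "\<alpha> = 1")
  case False
  then have \<alpha>: "0 < \<alpha>" "\<alpha> < 1"
    using assms(9,10) by auto
  obtain c where "0 < c" and \<pi>: "\<pi> = density \<mu> (\<lambda>x. ennreal (c * l x))"
    using assms(7) by blast
  have "(\<integral>x. c * l x \<partial>\<mu>) = 1"
    using assms(3,5,6) \<open>0 < c\<close> unfolding \<pi> by (intro prob_space_density_imp_integral_eq_1) auto
  then interpret feature_likelihood \<mu> \<phi> l c
    by (intro feature_likelihood.intro feature_likelihood_axioms.intro assms(1))
      (simp_all add: measurable_cong_sets[OF assms(2) refl] assms)
  have "0 \<le> c * (\<integral>x. l_opt \<mu> \<phi> l \<alpha> x \<partial>\<mu>)"
    using c_pos integral_l_opt_pos[of \<alpha>] \<alpha> by simp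
  from divergence_bounds_of_affinity_bounds[OF \<alpha> this hellinger_affinity_bounds[OF \<alpha>]]
  show ?thesis
    unfolding \<pi> alpha_div_pi_opt_alpha[OF \<alpha>] alpha_div_pi_opt_one[OF \<alpha>] ..
qed simp

end
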